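(* The finitely generated objects of the category $\mathsf{Alex}$ of Alexandroff-discrete spaces are precisely the finite topological spaces. The finitely generated objects of the category $\mathsf{Alex}_0$ of Alexandroff-discrete T$_0$-spaces are precisely the finite T$_0$-spaces.
   Context: A topological space is Alexandroff-discrete if arbitrary intersections of open sets are open. $\mathsf{Alex}$ and $\mathsf{Alex}_0$ are the full subcategories of $\mathsf{Top}$ of Alexandroff-discrete spaces and of Alexandroff-discrete T$_0$-spaces, respectively. An object $X$ of a category $\mathcal{C}$ is finitely generated if for every directed diagram $(Z_i)_{i\in I}$ in $\mathcal{C}$ (indexed by a directed poset, i.e. every finite subset has an upper bound) all of whose connecting morphisms $z_{i,j}$ are monomorphisms, with colimit cocone $c_i:Z_i\to Z$ in $\mathcal{C}$, every morphism $f:X\to Z$ factorizes as $f=c_i\cdot g$ for some $i$ and $g:X\to Z_i$, and if also $f=c_i\cdot g'$ then $z_{i,j}\cdot g=z_{i,j}\cdot g'$ for some connecting morphism $z_{i,j}$. *)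

theory Defs
  imports "HOL-Analysis.Analysis"
begin

text \<open>Alexandroff-discrete: arbitrary (nonempty) intersections of open sets are open.
  The empty intersection is the whole space, which is always open.\<close>
definition alexandroff_space :: "'a topology \<Rightarrow> bool" where
  "alexandroff_space X \<longleftrightarrow>
     (\<forall>\<U>. \<U> \<noteq> {} \<and> (\<forall>U\<in>\<U>. openin X U) \<longrightarrow> openin X (\<Inter>\<U>))"

text \<open>Monomorphism in the full subcategory of Top given by the predicate C
  (objects of C are spaces on the carrier type 'b; morphisms are continuous maps,
  identified when they agree on the topspace of the domain).\<close>
definition mono_in :: "('b topology \<Rightarrow> bool) \<Rightarrow> 'b topology \<Rightarrow> 'b topology \<Rightarrow> ('b \<Rightarrow> 'b) \<Rightarrow> bool" where
  "mono_in C A B m \<longleftrightarrow> continuous_map A B m \<and>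
     (\<forall>W g h. C W \<and> continuous_map W A g \<and> continuous_map W A h \<and>
        (\<forall>x\<in>topspace W. m (g x) = m (h x)) \<longrightarrow> (\<forall>x\<in>topspace W. g x = h x))"

definition directed_mono_diagram ::
  "('b topology \<Rightarrow> bool) \<Rightarrow> 'i set \<Rightarrow> ('i \<Rightarrow> 'i \<Rightarrow> bool) \<Rightarrow> ('i \<Rightarrow> 'b topology)
     \<Rightarrow> ('i \<Rightarrow> 'i \<Rightarrow> 'b \<Rightarrow> 'b) \<Rightarrow> bool" where
  "directed_mono_diagram C I le Z z \<longleftrightarrow>
     (\<forall>i\<in>I. le i i) \<and>
     (\<forall>i\<in>I. \<forall>j\<in>I. le i j \<and> le j i \<longrightarrow> i = j) \<and>
     (\<forall>i\<in>I. \<forall>j\<in>I. \<forall>k\<in>I. le i j \<and> le j k \<longrightarrow> le i k) \<and>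
     (\<forall>F. finite F \<and> F \<subseteq> I \<longrightarrow> (\<exists>u\<in>I. \<forall>i\<in>F. le i u)) \<and>
     (\<forall>i\<in>I. C (Z i)) \<and>
     (\<forall>i\<in>I. \<forall>j\<in>I. le i j \<longrightarrow> mono_in C (Z i) (Z j) (z i j)) \<and>
     (\<forall>i\<in>I. \<forall>x\<in>topspace (Z i). z i i x = x) \<and>
     (\<forall>i\<in>I. \<forall>j\<in>I. \<forall>k\<in>I. le i j \<and> le j k \<longrightarrow>
        (\<forall>x\<in>topspace (Z i). z j k (z i j x) = z i k x))"

definition is_colimit_in ::
  "('b topology \<Rightarrow> bool) \<Rightarrow> 'i set \<Rightarrow> ('i \<Rightarrow> 'i \<Rightarrow> bool) \<Rightarrow> ('i \<Rightarrow> 'b topology)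
     \<Rightarrow> ('i \<Rightarrow> 'i \<Rightarrow> 'b \<Rightarrow> 'b) \<Rightarrow> 'b topology \<Rightarrow> ('i \<Rightarrow> 'b \<Rightarrow> 'b) \<Rightarrow> bool" where
  "is_colimit_in C I le Z z L c \<longleftrightarrow>
     C L \<and>
     (\<forall>i\<in>I. continuous_map (Z i) L (c i)) \<and>
     (\<forall>i\<in>I. \<forall>j\<in>I. le i j \<longrightarrow> (\<forall>x\<in>topspace (Z i). c j (z i j x) = c i x)) \<and>
     (\<forall>W d. C W \<and> (\<forall>i\<in>I. continuous_map (Z i) W (d i)) \<and>
        (\<forall>i\<in>I. \<forall>j\<in>I. le i j \<longrightarrow> (\<forall>x\<in>topspace (Z i). d j (z i j x) = d i x)) \<longrightarrow>
        (\<exists>u. continuous_map L W u \<and>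
             (\<forall>i\<in>I. \<forall>x\<in>topspace (Z i). u (c i x) = d i x) \<and>
             (\<forall>u'. continuous_map L W u' \<and>
                   (\<forall>i\<in>I. \<forall>x\<in>topspace (Z i). u' (c i x) = d i x) \<longrightarrow>
                   (\<forall>y\<in>topspace L. u' y = u y))))"

text \<open>Finitely generated object X of C, where diagrams are indexed by subsets of
  the type 'i and have vertices (in C) on the carrier type 'b.\<close>
definition fin_gen :: "'i itself \<Rightarrow> ('b topology \<Rightarrow> bool) \<Rightarrow> 'a topology \<Rightarrow> bool" where
  "fin_gen _ C X \<longleftrightarrow>
     (\<forall>(I::'i set) le Z z L c.
        directed_mono_diagram C I le Z z \<and> is_colimit_in C I le Z z L c \<longrightarrow>
        (\<forall>f. continuous_map X L f \<longrightarrow>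
           (\<exists>i\<in>I. \<exists>g. continuous_map X (Z i) g \<and> (\<forall>x\<in>topspace X. f x = c i (g x))) \<and>
           (\<forall>i\<in>I. \<forall>g g'. continuous_map X (Z i) g \<and> continuous_map X (Z i) g' \<and>
               (\<forall>x\<in>topspace X. f x = c i (g x)) \<and> (\<forall>x\<in>topspace X. f x = c i (g' x)) \<longrightarrow>
               (\<exists>j\<in>I. le i j \<and> (\<forall>x\<in>topspace X. z i j (g x) = z i j (g' x))))))"

definition alex0_space :: "'a topology \<Rightarrow> bool" where
  "alex0_space X \<longleftrightarrow> alexandroff_space X \<and> t0_space X"

end

theory Submission
  imports Defs
begin

text \<open>An Alexandroff space is determined by its specialisation preorder: a map out of it is
  continuous exactly when it is monotone. Let L be the colimit of a directed diagram of
  Alexandroff spaces with cocone c. A cocone into the Sierpinski space that separates the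
  points eventually above a from the rest shows that c i a \<le> c i b in L forces
  z i k a \<le> z i k b at some later stage k; the indiscrete two-point space, or T0-ness and
  antisymmetry, does the same for equalities, and closure under subspaces makes L the union
  of the images of the cocone. A continuous map from a finite space amounts to finitely many
  such order relations, so it factors through some stage, essentially uniquely. Conversely,
  an Alexandroff space is the directed colimit of its finite subspaces, so if it is finitely
  generated its identity factors through one of them.\<close>

section \<open>The specialisation preorder and Alexandroff spaces\<close>

definition specialization_le :: "'a topology \<Rightarrow> 'a \<Rightarrow> 'a \<Rightarrow> bool" where
  "specialization_le X x y \<longleftrightarrow>
     x \<in> topspace X \<and> y \<in> topspace X \<and> (\<forall>U. openin X U \<and> x \<in> U \<longrightarrow> y \<in> U)"

lemma specialization_le_refl: "x \<in> topspace X \<Longrightarrow> specialization_le X x x"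
  by (simp add: specialization_le_def)

lemma specialization_le_trans:
  "specialization_le X x y \<Longrightarrow> specialization_le X y w \<Longrightarrow> specialization_le X x w"
  by (simp add: specialization_le_def)

lemma continuous_map_specialization_le:
  "continuous_map X Y f \<Longrightarrow> specialization_le X x y \<Longrightarrow> specialization_le Y (f x) (f y)"
  unfolding specialization_le_def continuous_map_def by (auto simp: Pi_iff)

lemma specialization_le_subtopology:
  "specialization_le X x y \<Longrightarrow> x \<in> S \<Longrightarrow> y \<in> S \<Longrightarrow> specialization_le (subtopology X S) x y"
  by (auto simp: specialization_le_def openin_subtopology)

lemma t0_space_specialization_le_antisym:
  assumes "t0_space X" "specialization_le X x y" "specialization_le X y x"
  shows "x = y"
proof (rule ccontr)
  assume "x \<noteq> y"
  moreover have "x \<in> topspace X" "y \<in> topspace X"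
    using assms(2) by (simp_all add: specialization_le_def)
  ultimately obtain U where "openin X U" "x \<notin> U \<longleftrightarrow> y \<in> U"
    using assms(1) unfolding t0_space_def by blast
  then show False
    using assms(2,3) unfolding specialization_le_def by (cases "x \<in> U") auto
qed

lemma alexandroff_openin_upset:
  assumes X: "alexandroff_space X" and U: "U \<subseteq> topspace X"
    and up: "\<And>x y. x \<in> U \<Longrightarrow> specialization_le X x y \<Longrightarrow> y \<in> U"
  shows "openin X U"
proof -
  define N where "N x = \<Inter>{V. openin X V \<and> x \<in> V}" for x
  have "openin X (N x)" if "x \<in> topspace X" for x
  proof -
    have "topspace X \<in> {V. openin X V \<and> x \<in> V}"
      using that by simp
    then show ?thesis
      unfolding N_def by (intro X[unfolded alexandroff_space_def, rule_format]) auto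
  qed
  moreover have "N x \<subseteq> U" if "x \<in> U" for x
  proof
    fix y assume "y \<in> N x"
    then have "specialization_le X x y"
      using that U unfolding N_def specialization_le_def by auto
    then show "y \<in> U"
      using up that by blast
  qed
  moreover have "x \<in> N x" for x
    by (simp add: N_def)
  ultimately have "openin X (\<Union>x\<in>U. N x)" and "U = (\<Union>x\<in>U. N x)"
    using U by blast+
  then show ?thesis by simp
qed

lemma alexandroff_continuous_mapI:
  assumes "alexandroff_space X" and "\<And>x. x \<in> topspace X \<Longrightarrow> f x \<in> topspace Y"
    and "\<And>x y. specialization_le X x y \<Longrightarrow> specialization_le Y (f x) (f y)"
  shows "continuous_map X Y f"
  unfolding continuous_map_def
proof (intro conjI allI impI)
  show "f \<in> topspace X \<rightarrow> topspace Y" using assms(2) by auto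
  fix V assume "openin Y V"
  then show "openin X {x \<in> topspace X. f x \<in> V}"
    using assms by (intro alexandroff_openin_upset) (auto simp: specialization_le_def)
qed

lemma finite_topspace_imp_alexandroff_space:
  assumes "finite (topspace X)" shows "alexandroff_space X"
  unfolding alexandroff_space_def
proof (intro allI impI)
  fix \<U> assume \<U>: "\<U> \<noteq> {} \<and> (\<forall>U\<in>\<U>. openin X U)"
  then have "\<U> \<subseteq> Pow (topspace X)" using openin_subset by auto
  then have "finite \<U>" using assms finite_subset by blast
  then show "openin X (\<Inter>\<U>)" using \<U> by blast
qed

lemma alexandroff_space_subtopology:
  assumes "alexandroff_space X" shows "alexandroff_space (subtopology X S)"
  unfolding alexandroff_space_def
proof (intro allI impI)
  fix \<U> assume \<U>: "\<U> \<noteq> {} \<and> (\<forall>U\<in>\<U>. openin (subtopology X S) U)"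
  then obtain T where T: "\<And>U. U \<in> \<U> \<Longrightarrow> openin X (T U) \<and> U = T U \<inter> S"
    unfolding openin_subtopology by metis
  then have "openin X (\<Inter>(T ` \<U>))"
    using \<U> by (intro assms[unfolded alexandroff_space_def, rule_format]) auto
  moreover have "\<Inter>\<U> = \<Inter>(T ` \<U>) \<inter> S"
    using \<U> T by blast
  ultimately show "openin (subtopology X S) (\<Inter>\<U>)"
    unfolding openin_subtopology by blast
qed

lemma alex0_space_subtopology: "alex0_space X \<Longrightarrow> alex0_space (subtopology X S)"
  by (simp add: alex0_space_def alexandroff_space_subtopology t0_space_subtopology)

section \<open>Two-point spaces\<close>

definition sierpinski_topology :: "'a \<Rightarrow> 'a \<Rightarrow> 'a topology" where
  "sierpinski_topology a b = topology (\<lambda>U. U \<subseteq> {a, b} \<and> (b \<in> U \<longrightarrow> a \<in> U))"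

lemma openin_sierpinski_topology:
  "openin (sierpinski_topology a b) U \<longleftrightarrow> U \<subseteq> {a, b} \<and> (b \<in> U \<longrightarrow> a \<in> U)"
proof -
  have "istopology (\<lambda>U. U \<subseteq> {a, b} \<and> (b \<in> U \<longrightarrow> a \<in> U))"
    unfolding istopology_def by blast
  then show ?thesis by (simp add: sierpinski_topology_def)
qed

lemma topspace_sierpinski_topology [simp]: "topspace (sierpinski_topology a b) = {a, b}"
  unfolding topspace_def openin_sierpinski_topology by blast

lemma specialization_le_sierpinski_topology:
  "specialization_le (sierpinski_topology a b) x y \<longleftrightarrow>
     x \<in> {a, b} \<and> y \<in> {a, b} \<and> (x = b \<or> y = a)"
proof
  assume "specialization_le (sierpinski_topology a b) x y"
  moreover have "openin (sierpinski_topology a b) {a}"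
    by (simp add: openin_sierpinski_topology)
  ultimately show "x \<in> {a, b} \<and> y \<in> {a, b} \<and> (x = b \<or> y = a)"
    unfolding specialization_le_def by auto
next
  assume "x \<in> {a, b} \<and> y \<in> {a, b} \<and> (x = b \<or> y = a)"
  then show "specialization_le (sierpinski_topology a b) x y"
    by (auto simp: specialization_le_def openin_sierpinski_topology)
qed

lemma alexandroff_space_sierpinski_topology: "alexandroff_space (sierpinski_topology a b)"
  by (simp add: finite_topspace_imp_alexandroff_space)

lemma t0_space_sierpinski_topology: "t0_space (sierpinski_topology a b)"
  by (auto simp: t0_space_def openin_sierpinski_topology intro!: exI[of _ "{a}"])

definition indiscrete_topology :: "'a set \<Rightarrow> 'a topology" where
  "indiscrete_topology S = topology (\<lambda>U. U = {} \<or> U = S)"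

lemma openin_indiscrete_topology: "openin (indiscrete_topology S) U \<longleftrightarrow> U = {} \<or> U = S"
proof -
  have "\<Union>\<K> = {} \<or> \<Union>\<K> = S" if "\<forall>U\<in>\<K>. U = {} \<or> U = S" for \<K>
    using that by (cases "S \<in> \<K>") auto
  then have "istopology (\<lambda>U. U = {} \<or> U = S)"
    unfolding istopology_def by auto
  then show ?thesis by (simp add: indiscrete_topology_def)
qed

lemma topspace_indiscrete_topology [simp]: "topspace (indiscrete_topology S) = S"
  unfolding topspace_def openin_indiscrete_topology by blast

lemma continuous_map_indiscrete_topology:
  "continuous_map X (indiscrete_topology S) f \<longleftrightarrow> f \<in> topspace X \<rightarrow> S"
proof -
  have "{x \<in> topspace X. f x \<in> S} = topspace X" if "f \<in> topspace X \<rightarrow> S"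
    using that by auto
  then show ?thesis
    unfolding continuous_map_def openin_indiscrete_topology by auto
qed

lemma alexandroff_space_indiscrete_topology: "alexandroff_space (indiscrete_topology S)"
proof -
  have "\<Inter>\<U> = {} \<or> \<Inter>\<U> = S" if "\<U> \<noteq> {}" "\<forall>U\<in>\<U>. U = {} \<or> U = S" for \<U>
    using that by (cases "{} \<in> \<U>") auto
  then show ?thesis
    unfolding alexandroff_space_def openin_indiscrete_topology by blast
qed

section \<open>Directed diagrams and their colimits\<close>

locale directed_diagram =
  fixes C :: "'b topology \<Rightarrow> bool" and I :: "'i set" and le :: "'i \<Rightarrow> 'i \<Rightarrow> bool"
    and Z :: "'i \<Rightarrow> 'b topology" and z :: "'i \<Rightarrow> 'i \<Rightarrow> 'b \<Rightarrow> 'b"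
  assumes directed_mono_diagram: "directed_mono_diagram C I le Z z"
begin

lemma index_refl: "i \<in> I \<Longrightarrow> le i i"
  using directed_mono_diagram by (simp add: directed_mono_diagram_def)

lemma index_trans:
  assumes "i \<in> I" "j \<in> I" "k \<in> I" "le i j" "le j k" shows "le i k"
proof -
  have "\<forall>i\<in>I. \<forall>j\<in>I. \<forall>k\<in>I. le i j \<and> le j k \<longrightarrow> le i k"
    using directed_mono_diagram unfolding directed_mono_diagram_def by (elim conjE)
  with assms show ?thesis by blast
qed

lemma index_upper_bound: "\<lbrakk>finite F; F \<subseteq> I\<rbrakk> \<Longrightarrow> \<exists>u\<in>I. \<forall>i\<in>F. le i u"
  using directed_mono_diagram by (simp add: directed_mono_diagram_def)

lemma index_upper_bound2: "\<lbrakk>i \<in> I; j \<in> I\<rbrakk> \<Longrightarrow> \<exists>k\<in>I. le i k \<and> le j k"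
  using index_upper_bound[of "{i, j}"] by auto

lemma index_nonempty: "I \<noteq> {}"
  using index_upper_bound[of "{}"] by auto

lemma vertex_in_class: "i \<in> I \<Longrightarrow> C (Z i)"
  using directed_mono_diagram by (simp add: directed_mono_diagram_def)

lemma connecting_continuous:
  assumes "i \<in> I" "j \<in> I" "le i j" shows "continuous_map (Z i) (Z j) (z i j)"
proof -
  have "\<forall>i\<in>I. \<forall>j\<in>I. le i j \<longrightarrow> mono_in C (Z i) (Z j) (z i j)"
    using directed_mono_diagram unfolding directed_mono_diagram_def by (elim conjE)
  with assms have "mono_in C (Z i) (Z j) (z i j)" by blast
  then show ?thesis by (simp add: mono_in_def)
qed

lemma connecting_topspace:
  "\<lbrakk>i \<in> I; j \<in> I; le i j; x \<in> topspace (Z i)\<rbrakk> \<Longrightarrow> z i j x \<in> topspace (Z j)"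
  using connecting_continuous by (auto simp: continuous_map_def)

lemma connecting_id: "\<lbrakk>i \<in> I; x \<in> topspace (Z i)\<rbrakk> \<Longrightarrow> z i i x = x"
  using directed_mono_diagram by (simp add: directed_mono_diagram_def)

lemma connecting_comp:
  assumes "i \<in> I" "j \<in> I" "k \<in> I" "le i j" "le j k" "x \<in> topspace (Z i)"
  shows "z j k (z i j x) = z i k x"
proof -
  have "\<forall>i\<in>I. \<forall>j\<in>I. \<forall>k\<in>I. le i j \<and> le j k \<longrightarrow>
      (\<forall>x\<in>topspace (Z i). z j k (z i j x) = z i k x)"
    using directed_mono_diagram unfolding directed_mono_diagram_def by (elim conjE)
  with assms show ?thesis by blast
qed

lemma common_stage_finite:
  assumes "finite F" "i \<in> I"
    and eventually: "\<And>x. x \<in> F \<Longrightarrow> \<exists>k\<in>I. le i k \<and> P x k"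
    and upward: "\<And>x k k'. \<lbrakk>x \<in> F; k \<in> I; k' \<in> I; le i k; le k k'; P x k\<rbrakk> \<Longrightarrow> P x k'"
  shows "\<exists>k\<in>I. le i k \<and> (\<forall>x\<in>F. P x k)"
proof -
  obtain kx where kx: "\<And>x. x \<in> F \<Longrightarrow> kx x \<in> I \<and> le i (kx x) \<and> P x (kx x)"
    using eventually by metis
  have "finite (insert i (kx ` F))" "insert i (kx ` F) \<subseteq> I"
    using assms kx by auto
  from index_upper_bound[OF this] obtain k where k: "k \<in> I" "\<forall>j\<in>insert i (kx ` F). le j k"
    by blast
  have "P x k" if "x \<in> F" for x
    using upward[of x "kx x" k] kx[OF that] k that by simp
  then show ?thesis
    using k by blast
qed

definition compatible_relation :: "('i \<Rightarrow> 'b \<Rightarrow> 'b \<Rightarrow> bool) \<Rightarrow> bool" where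
  "compatible_relation R \<longleftrightarrow>
     (\<forall>k\<in>I. \<forall>k'\<in>I. le k k' \<longrightarrow> (\<forall>p q. R k p q \<longrightarrow> R k' (z k k' p) (z k k' q)))"

lemma compatible_relation_eq: "compatible_relation (\<lambda>_. (=))"
  by (simp add: compatible_relation_def)

lemma compatible_relation_specialization_le: "compatible_relation (\<lambda>k. specialization_le (Z k))"
  unfolding compatible_relation_def
proof (intro ballI impI allI)
  fix k k' p q assume "k \<in> I" "k' \<in> I" "le k k'" "specialization_le (Z k) p q"
  then show "specialization_le (Z k') (z k k' p) (z k k' q)"
    by (rule continuous_map_specialization_le[OF connecting_continuous])
qed

lemma compatible_relation_transport:
  assumes "compatible_relation R"
    and "i \<in> I" "j \<in> I" "k \<in> I" "k' \<in> I" "le i k" "le j k" "le k k'"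
    and "a \<in> topspace (Z i)" "x \<in> topspace (Z j)" "R k (z i k a) (z j k x)"
  shows "R k' (z i k' a) (z j k' x)"
proof -
  have "R k' (z k k' (z i k a)) (z k k' (z j k x))"
    using assms unfolding compatible_relation_def by blast
  then show ?thesis
    using assms by (simp add: connecting_comp)
qed

definition eventually_related :: "('i \<Rightarrow> 'b \<Rightarrow> 'b \<Rightarrow> bool) \<Rightarrow> 'i \<Rightarrow> 'b \<Rightarrow> 'i \<Rightarrow> 'b \<Rightarrow> bool" where
  "eventually_related R i a j x \<longleftrightarrow> (\<exists>k\<in>I. le i k \<and> le j k \<and> R k (z i k a) (z j k x))"

lemma eventually_related_refl:
  assumes "\<And>p. p \<in> topspace (Z i) \<Longrightarrow> R i p p" and "i \<in> I" "a \<in> topspace (Z i)"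
  shows "eventually_related R i a i a"
  using assms unfolding eventually_related_def by (metis connecting_id index_refl)

lemma eventually_related_connecting:
  assumes R: "compatible_relation R" and ij: "i \<in> I" "j \<in> I" "j' \<in> I" "le j j'"
    and a: "a \<in> topspace (Z i)" and x: "x \<in> topspace (Z j)"
  shows "eventually_related R i a j' (z j j' x) \<longleftrightarrow> eventually_related R i a j x"
proof
  assume "eventually_related R i a j' (z j j' x)"
  then obtain k where "k \<in> I" "le i k" "le j' k" "R k (z i k a) (z j' k (z j j' x))"
    unfolding eventually_related_def by blast
  with ij x show "eventually_related R i a j x"
    unfolding eventually_related_def by (metis connecting_comp index_trans)
next
  assume "eventually_related R i a j x"
  then obtain k where k: "k \<in> I" "le i k" "le j k" "R k (z i k a) (z j k x)"
    unfolding eventually_related_def by blast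
  obtain k' where k': "k' \<in> I" "le k k'" "le j' k'"
    using index_upper_bound2 k(1) ij(3) by blast
  have "R k' (z i k' a) (z j k' x)"
    using compatible_relation_transport[OF R ij(1,2) k(1) k'(1) k(2,3) k'(2) a x k(4)] .
  moreover have "z j' k' (z j j' x) = z j k' x"
    using connecting_comp[OF ij(2,3) k'(1) ij(4) k'(3) x] .
  ultimately show "eventually_related R i a j' (z j j' x)"
    unfolding eventually_related_def using ij k k' by (metis index_trans)
qed

end

locale diagram_colimit = directed_diagram +
  fixes L and c
  assumes is_colimit: "is_colimit_in C I le Z z L c"
begin

lemma colimit_in_class: "C L"
  using is_colimit by (simp add: is_colimit_in_def)

lemma cocone_continuous: "i \<in> I \<Longrightarrow> continuous_map (Z i) L (c i)"
  using is_colimit by (simp add: is_colimit_in_def)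

lemma cocone_topspace: "\<lbrakk>i \<in> I; x \<in> topspace (Z i)\<rbrakk> \<Longrightarrow> c i x \<in> topspace L"
  using cocone_continuous by (auto simp: continuous_map_def)

lemma cocone_commutes: "\<lbrakk>i \<in> I; j \<in> I; le i j; x \<in> topspace (Z i)\<rbrakk> \<Longrightarrow> c j (z i j x) = c i x"
  using is_colimit by (simp add: is_colimit_in_def)

lemmas colimit_universal =
  is_colimit[unfolded is_colimit_in_def, THEN conjunct2, THEN conjunct2, THEN conjunct2, rule_format]

lemma colimit_map_exists:
  assumes "C W" "\<And>i. i \<in> I \<Longrightarrow> continuous_map (Z i) W (d i)"
    and "\<And>i j x. \<lbrakk>i \<in> I; j \<in> I; le i j; x \<in> topspace (Z i)\<rbrakk> \<Longrightarrow> d j (z i j x) = d i x"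
  obtains u where "continuous_map L W u" "\<And>i x. \<lbrakk>i \<in> I; x \<in> topspace (Z i)\<rbrakk> \<Longrightarrow> u (c i x) = d i x"
proof -
  have "C W \<and> (\<forall>i\<in>I. continuous_map (Z i) W (d i)) \<and>
      (\<forall>i\<in>I. \<forall>j\<in>I. le i j \<longrightarrow> (\<forall>x\<in>topspace (Z i). d j (z i j x) = d i x))"
    using assms by blast
  from colimit_universal[OF this] obtain u where
    "continuous_map L W u" "\<forall>i\<in>I. \<forall>x\<in>topspace (Z i). u (c i x) = d i x"
    by blast
  then show thesis
    using that by blast
qed

lemma colimit_maps_eq:
  assumes W: "C W" and u: "continuous_map L W u" and u': "continuous_map L W u'"
    and cocone: "\<And>i x. \<lbrakk>i \<in> I; x \<in> topspace (Z i)\<rbrakk> \<Longrightarrow> u (c i x) = u' (c i x)"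
    and y: "y \<in> topspace L"
  shows "u y = u' y"
proof -
  define d where "d = (\<lambda>i x. u (c i x))"
  have "\<forall>i\<in>I. continuous_map (Z i) W (d i)"
    using continuous_map_compose[OF cocone_continuous u] by (simp add: d_def o_def)
  moreover have "\<forall>i\<in>I. \<forall>j\<in>I. le i j \<longrightarrow> (\<forall>x\<in>topspace (Z i). d j (z i j x) = d i x)"
    by (simp add: d_def cocone_commutes)
  ultimately obtain v where v: "\<forall>w. continuous_map L W w \<and>
      (\<forall>i\<in>I. \<forall>x\<in>topspace (Z i). w (c i x) = d i x) \<longrightarrow> (\<forall>y\<in>topspace L. w y = v y)"
    using colimit_universal[of W d] W by blast
  have "u y = v y" "u' y = v y"
    using v u u' cocone y by (simp_all add: d_def)
  then show ?thesis by simp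
qed

lemma colimit_topspace_cover:
  assumes "C (subtopology L (\<Union>i\<in>I. c i ` topspace (Z i)))"
  shows "topspace L = (\<Union>i\<in>I. c i ` topspace (Z i))"
proof
  show "(\<Union>i\<in>I. c i ` topspace (Z i)) \<subseteq> topspace L"
    using cocone_topspace by blast
next
  let ?S = "\<Union>i\<in>I. c i ` topspace (Z i)"
  have c_into_S: "continuous_map (Z i) (subtopology L ?S) (c i)" if "i \<in> I" for i
    using cocone_continuous that by (auto simp: continuous_map_in_subtopology)
  obtain r where r: "continuous_map L (subtopology L ?S) r"
    and r_cocone: "\<And>i x. \<lbrakk>i \<in> I; x \<in> topspace (Z i)\<rbrakk> \<Longrightarrow> r (c i x) = c i x"
    by (rule colimit_map_exists[OF assms, of c]) (use c_into_S cocone_commutes in auto)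
  show "topspace L \<subseteq> ?S"
  proof
    fix y assume y: "y \<in> topspace L"
    have "r y = id y"
      using colimit_maps_eq[OF colimit_in_class _ continuous_map_id _ y] r r_cocone
      by (simp add: continuous_map_in_subtopology)
    moreover have "r y \<in> ?S"
      using r y unfolding continuous_map_in_subtopology by blast
    ultimately show "y \<in> ?S" by simp
  qed
qed

text \<open>Evaluating the induced map at c i b decides whether b is eventually R-related to a:
  this is how properties of the colimit are reflected back into the stages.\<close>

lemma colimit_separating_map:
  assumes R: "compatible_relation R" and R_refl: "\<And>p. p \<in> topspace (Z i) \<Longrightarrow> R i p p"
    and W: "C W" and i: "i \<in> I" and a: "a \<in> topspace (Z i)" and b: "b \<in> topspace (Z i)"
    and cont: "\<And>j. j \<in> I \<Longrightarrow>
      continuous_map (Z j) W (\<lambda>x. if eventually_related R i a j x then a else b)"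
  obtains u where "continuous_map L W u" and "u (c i a) = a"
    and "u (c i b) = (if eventually_related R i a i b then a else b)"
proof -
  define d where "d = (\<lambda>j x. if eventually_related R i a j x then a else b)"
  have "d j' (z j j' x) = d j x"
    if "j \<in> I" "j' \<in> I" "le j j'" "x \<in> topspace (Z j)" for j j' x
    using eventually_related_connecting[OF R i that(1-3) a that(4)] by (simp add: d_def)
  then obtain u where u: "continuous_map L W u"
    and u_cocone: "\<And>j x. \<lbrakk>j \<in> I; x \<in> topspace (Z j)\<rbrakk> \<Longrightarrow> u (c j x) = d j x"
    using colimit_map_exists[OF W, of d] cont unfolding d_def by blast
  moreover have "u (c i a) = a"
    using u_cocone[OF i a] eventually_related_refl[where R = R, OF R_refl i a] by (simp add: d_def)
  moreover have "u (c i b) = (if eventually_related R i a i b then a else b)"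
    using u_cocone[OF i b] by (simp add: d_def)
  ultimately show thesis
    using that by blast
qed

lemma colimit_reflects_specialization_le:
  assumes alex: "\<And>j. j \<in> I \<Longrightarrow> alexandroff_space (Z j)"
    and sierpinski: "\<And>a b. a \<noteq> b \<Longrightarrow> C (sierpinski_topology a b)"
    and i: "i \<in> I" and a: "a \<in> topspace (Z i)" and b: "b \<in> topspace (Z i)"
    and le_ab: "specialization_le L (c i a) (c i b)"
  shows "\<exists>k\<in>I. le i k \<and> specialization_le (Z k) (z i k a) (z i k b)"
proof (cases "a = b")
  case True
  then show ?thesis
    using i a by (metis connecting_id index_refl specialization_le_refl)
next
  case False
  let ?R = "\<lambda>k. specialization_le (Z k)"
  have cont: "continuous_map (Z j) (sierpinski_topology a b)
      (\<lambda>x. if eventually_related ?R i a j x then a else b)" if j: "j \<in> I" for j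
  proof (rule alexandroff_continuous_mapI[OF alex[OF j]])
    fix x y assume xy: "specialization_le (Z j) x y"
    have "eventually_related ?R i a j y" if "eventually_related ?R i a j x"
      using that continuous_map_specialization_le[OF connecting_continuous xy] j
      unfolding eventually_related_def by (meson specialization_le_trans)
    then show "specialization_le (sierpinski_topology a b)
        (if eventually_related ?R i a j x then a else b) (if eventually_related ?R i a j y then a else b)"
      by (auto simp: specialization_le_sierpinski_topology)
  qed simp
  obtain u where u: "continuous_map L (sierpinski_topology a b) u" "u (c i a) = a"
    and u_b: "u (c i b) = (if eventually_related ?R i a i b then a else b)"
    by (rule colimit_separating_map[OF compatible_relation_specialization_le
          specialization_le_refl sierpinski[OF False] i a b cont])
  have "specialization_le (sierpinski_topology a b) a (u (c i b))"
    using continuous_map_specialization_le[OF u(1) le_ab] u(2) by simp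
  then have "eventually_related ?R i a i b"
    using False u_b by (auto simp: specialization_le_sierpinski_topology split: if_splits)
  then show ?thesis
    unfolding eventually_related_def by blast
qed

lemma colimit_reflects_eq_indiscrete:
  assumes indiscrete: "\<And>a b. a \<noteq> b \<Longrightarrow> C (indiscrete_topology {a, b})"
    and i: "i \<in> I" and a: "a \<in> topspace (Z i)" and b: "b \<in> topspace (Z i)"
    and eq: "c i a = c i b"
  shows "\<exists>k\<in>I. le i k \<and> z i k a = z i k b"
proof (cases "a = b")
  case True
  then show ?thesis
    using i index_refl by blast
next
  case False
  have cont: "continuous_map (Z j) (indiscrete_topology {a, b})
      (\<lambda>x. if eventually_related (\<lambda>_. (=)) i a j x then a else b)" for j
    by (auto simp: continuous_map_indiscrete_topology)
  obtain u where "u (c i a) = a" "u (c i b) = (if eventually_related (\<lambda>_. (=)) i a i b then a else b)"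
    by (rule colimit_separating_map[OF compatible_relation_eq refl indiscrete[OF False] i a b cont])
  then have "(if eventually_related (\<lambda>_. (=)) i a i b then a else b) = a"
    using eq by metis
  then have "eventually_related (\<lambda>_. (=)) i a i b"
    using False by metis
  then show ?thesis
    unfolding eventually_related_def by blast
qed

lemma colimit_reflects_eq_t0:
  assumes alex: "\<And>j. j \<in> I \<Longrightarrow> alexandroff_space (Z j)"
    and sierpinski: "\<And>a b. a \<noteq> b \<Longrightarrow> C (sierpinski_topology a b)"
    and t0: "\<And>W. C W \<Longrightarrow> t0_space W"
    and i: "i \<in> I" and a: "a \<in> topspace (Z i)" and b: "b \<in> topspace (Z i)"
    and eq: "c i a = c i b"
  shows "\<exists>k\<in>I. le i k \<and> z i k a = z i k b"
proof -
  have "specialization_le L (c i a) (c i b)" "specialization_le L (c i b) (c i a)"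
    using eq cocone_topspace[OF i a] by (simp_all add: specialization_le_refl)
  then obtain k1 k2 where k1: "k1 \<in> I" "le i k1" "specialization_le (Z k1) (z i k1 a) (z i k1 b)"
    and k2: "k2 \<in> I" "le i k2" "specialization_le (Z k2) (z i k2 b) (z i k2 a)"
    using colimit_reflects_specialization_le[OF alex sierpinski i] a b by metis
  obtain k where k: "k \<in> I" "le k1 k" "le k2 k"
    using index_upper_bound2[OF k1(1) k2(1)] by blast
  have "specialization_le (Z k) (z i k a) (z i k b)" "specialization_le (Z k) (z i k b) (z i k a)"
    using compatible_relation_transport[OF compatible_relation_specialization_le i i k1(1) k(1)
        k1(2) k1(2) k(2) a b k1(3)]
      compatible_relation_transport[OF compatible_relation_specialization_le i i k2(1) k(1)
        k2(2) k2(2) k(3) b a k2(3)]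
    by simp_all
  then have "z i k a = z i k b"
    by (rule t0_space_specialization_le_antisym[OF t0[OF vertex_in_class[OF k(1)]]])
  then show ?thesis
    using index_trans[OF i k1(1) k(1) k1(2) k(2)] k(1) by blast
qed

lemma colimit_reflects_eq:
  assumes "\<And>j. j \<in> I \<Longrightarrow> alexandroff_space (Z j)"
    and "\<And>a b. a \<noteq> b \<Longrightarrow> C (sierpinski_topology a b)"
    and "(\<forall>a b. a \<noteq> b \<longrightarrow> C (indiscrete_topology {a, b})) \<or> (\<forall>W. C W \<longrightarrow> t0_space W)"
    and "i \<in> I" "a \<in> topspace (Z i)" "b \<in> topspace (Z i)" "c i a = c i b"
  shows "\<exists>k\<in>I. le i k \<and> z i k a = z i k b"
  using assms(3)
proof
  assume "\<forall>a b. a \<noteq> b \<longrightarrow> C (indiscrete_topology {a, b})"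
  then show ?thesis
    using colimit_reflects_eq_indiscrete[OF _ assms(4-7)] by blast
next
  assume "\<forall>W. C W \<longrightarrow> t0_space W"
  then show ?thesis
    using colimit_reflects_eq_t0[OF assms(1,2) _ assms(4-7)] by blast
qed

lemma finite_subset_in_cocone_image:
  assumes cover: "C (subtopology L (\<Union>i\<in>I. c i ` topspace (Z i)))"
    and "finite A" "A \<subseteq> topspace L"
  shows "\<exists>k\<in>I. A \<subseteq> c k ` topspace (Z k)"
proof -
  obtain i0 where i0: "i0 \<in> I"
    using index_nonempty by blast
  have "\<exists>k\<in>I. le i0 k \<and> (\<forall>y\<in>A. y \<in> c k ` topspace (Z k))"
  proof (rule common_stage_finite[OF \<open>finite A\<close> i0])
    fix y assume "y \<in> A"
    then obtain j p where j: "j \<in> I" and p: "p \<in> topspace (Z j)" and y: "y = c j p"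
      using colimit_topspace_cover[OF cover] \<open>A \<subseteq> topspace L\<close> by blast
    obtain k where k: "k \<in> I" "le i0 k" "le j k"
      using index_upper_bound2[OF i0 j] by blast
    have "y = c k (z j k p)"
      using cocone_commutes[OF j k(1) k(3) p] y by simp
    then show "\<exists>k\<in>I. le i0 k \<and> y \<in> c k ` topspace (Z k)"
      using k connecting_topspace[OF j k(1) k(3) p] by blast
  next
    fix y k k' assume k: "k \<in> I" "k' \<in> I" "le k k'" and "y \<in> c k ` topspace (Z k)"
    then obtain p where p: "p \<in> topspace (Z k)" and "y = c k p"
      by blast
    then have "y = c k' (z k k' p)"
      using cocone_commutes[OF k p] by simp
    then show "y \<in> c k' ` topspace (Z k')"
      using connecting_topspace[OF k p] by blast
  qed
  then show ?thesis
    by blast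
qed

lemma finite_lift:
  assumes fin: "finite (topspace X)" and f: "continuous_map X L f"
    and alex: "\<And>j. j \<in> I \<Longrightarrow> alexandroff_space (Z j)"
    and sierpinski: "\<And>a b. a \<noteq> b \<Longrightarrow> C (sierpinski_topology a b)"
    and cover: "C (subtopology L (\<Union>i\<in>I. c i ` topspace (Z i)))"
  shows "\<exists>i\<in>I. \<exists>g. continuous_map X (Z i) g \<and> (\<forall>x\<in>topspace X. f x = c i (g x))"
proof -
  have "f ` topspace X \<subseteq> topspace L"
    using f by (auto simp: continuous_map_def)
  then obtain i where i: "i \<in> I" and "f ` topspace X \<subseteq> c i ` topspace (Z i)"
    using finite_subset_in_cocone_image[OF cover] fin by blast
  then have "\<forall>x\<in>topspace X. \<exists>p. p \<in> topspace (Z i) \<and> f x = c i p"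
    by blast
  from bchoice[OF this] obtain g0
    where g0: "\<And>x. x \<in> topspace X \<Longrightarrow> g0 x \<in> topspace (Z i) \<and> f x = c i (g0 x)"
    by blast
  let ?P = "\<lambda>(x, y) k. specialization_le (Z k) (z i k (g0 x)) (z i k (g0 y))"
  let ?F = "{(x, y). specialization_le X x y}"
  have "finite ?F"
    by (rule finite_subset[of _ "topspace X \<times> topspace X"])
      (auto simp: specialization_le_def fin)
  then have "\<exists>k\<in>I. le i k \<and> (\<forall>p\<in>?F. ?P p k)"
  proof (rule common_stage_finite[OF _ i])
    fix p assume "p \<in> ?F"
    then obtain x y where p: "p = (x, y)" and xy: "specialization_le X x y"
      by blast
    then have "x \<in> topspace X" "y \<in> topspace X"
      by (simp_all add: specialization_le_def)
    moreover have "specialization_le L (f x) (f y)"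
      using continuous_map_specialization_le[OF f xy] .
    ultimately show "\<exists>k\<in>I. le i k \<and> ?P p k"
      using colimit_reflects_specialization_le[OF alex sierpinski i] g0 p by auto
  next
    fix p k k' assume "p \<in> ?F" and k: "k \<in> I" "k' \<in> I" "le i k" "le k k'" and "?P p k"
    moreover obtain x y where "p = (x, y)" and xy: "specialization_le X x y"
      using \<open>p \<in> ?F\<close> by blast
    moreover have "g0 x \<in> topspace (Z i)" "g0 y \<in> topspace (Z i)"
      using xy g0 by (simp_all add: specialization_le_def)
    ultimately show "?P p k'"
      using compatible_relation_transport[OF compatible_relation_specialization_le i i k(1,2,3,3,4)]
      by simp
  qed
  then obtain k where k: "k \<in> I" "le i k" and mono: "\<And>x y. specialization_le X x y \<Longrightarrow>
      specialization_le (Z k) (z i k (g0 x)) (z i k (g0 y))"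
    by auto
  have "continuous_map X (Z k) (\<lambda>x. z i k (g0 x))"
  proof (rule alexandroff_continuous_mapI[OF finite_topspace_imp_alexandroff_space[OF fin]])
    show "z i k (g0 x) \<in> topspace (Z k)" if "x \<in> topspace X" for x
      using connecting_topspace[OF i k] g0[OF that] by blast
  qed (rule mono)
  moreover have "f x = c k (z i k (g0 x))" if "x \<in> topspace X" for x
    using cocone_commutes[OF i k] g0[OF that] by simp
  ultimately show ?thesis
    using k(1) by blast
qed

lemma finite_lift_essentially_unique:
  assumes fin: "finite (topspace X)" and i: "i \<in> I"
    and g: "continuous_map X (Z i) g" and g': "continuous_map X (Z i) g'"
    and eq: "\<And>x. x \<in> topspace X \<Longrightarrow> c i (g x) = c i (g' x)"
    and reflects: "\<And>a b. \<lbrakk>a \<in> topspace (Z i); b \<in> topspace (Z i); c i a = c i b\<rbrakk> \<Longrightarrow>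
      \<exists>k\<in>I. le i k \<and> z i k a = z i k b"
  shows "\<exists>j\<in>I. le i j \<and> (\<forall>x\<in>topspace X. z i j (g x) = z i j (g' x))"
proof (rule common_stage_finite[OF fin i])
  fix x assume "x \<in> topspace X"
  then show "\<exists>k\<in>I. le i k \<and> z i k (g x) = z i k (g' x)"
    using reflects eq g g' by (simp add: continuous_map_def Pi_iff)
next
  fix x k k' assume "x \<in> topspace X" "k \<in> I" "k' \<in> I" "le i k" "le k k'"
    and "z i k (g x) = z i k (g' x)"
  then show "z i k' (g x) = z i k' (g' x)"
    using compatible_relation_transport[OF compatible_relation_eq i i] g g'
    by (simp add: continuous_map_def Pi_iff)
qed

end

section \<open>Finitely generated Alexandroff spaces\<close>

lemma fin_gen_of_finite_topspace:
  fixes C :: "'b topology \<Rightarrow> bool" and X :: "'a topology"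
  assumes fin: "finite (topspace X)"
    and alex: "\<And>W. C W \<Longrightarrow> alexandroff_space W"
    and subtop: "\<And>W S. C W \<Longrightarrow> C (subtopology W S)"
    and sierpinski: "\<And>a b. a \<noteq> b \<Longrightarrow> C (sierpinski_topology a b)"
    and separating: "(\<forall>a b. a \<noteq> b \<longrightarrow> C (indiscrete_topology {a, b})) \<or> (\<forall>W. C W \<longrightarrow> t0_space W)"
  shows "fin_gen TYPE('i) C X"
  unfolding fin_gen_def
proof (intro allI impI conjI ballI)
  fix I :: "'i set" and le Z z L c f
  assume "directed_mono_diagram C I le Z z \<and> is_colimit_in C I le Z z L c"
    and f: "continuous_map X L f"
  then interpret diagram_colimit C I le Z z L c
    by (simp add: diagram_colimit_def diagram_colimit_axioms_def directed_diagram_def)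
  have alex_Z: "\<And>j. j \<in> I \<Longrightarrow> alexandroff_space (Z j)"
    using alex vertex_in_class by blast
  show "\<exists>i\<in>I. \<exists>g. continuous_map X (Z i) g \<and> (\<forall>x\<in>topspace X. f x = c i (g x))"
    by (rule finite_lift[OF fin f alex_Z sierpinski subtop[OF colimit_in_class]])
  fix i g g'
  assume "i \<in> I" and "continuous_map X (Z i) g \<and> continuous_map X (Z i) g' \<and>
      (\<forall>x\<in>topspace X. f x = c i (g x)) \<and> (\<forall>x\<in>topspace X. f x = c i (g' x))"
  then show "\<exists>j\<in>I. le i j \<and> (\<forall>x\<in>topspace X. z i j (g x) = z i j (g' x))"
    using finite_lift_essentially_unique[OF fin] colimit_reflects_eq[OF alex_Z sierpinski separating]
    by (metis (no_types, lifting))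
qed

lemma directed_mono_diagram_finite_subspaces:
  assumes "\<And>S. C (subtopology X S)"
  shows "directed_mono_diagram C {F. finite F \<and> F \<subseteq> topspace X} (\<subseteq>) (subtopology X) (\<lambda>_ _ x. x)"
proof -
  have "continuous_map (subtopology X F) (subtopology X G) (\<lambda>x. x)" if "F \<subseteq> G" for F G
    using that by (auto simp: continuous_map_in_subtopology continuous_map_from_subtopology)
  moreover have "\<exists>G\<in>{F. finite F \<and> F \<subseteq> topspace X}. \<forall>F\<in>\<F>. F \<subseteq> G"
    if "finite \<F>" "\<F> \<subseteq> {F. finite F \<and> F \<subseteq> topspace X}" for \<F>
    using that by (intro bexI[of _ "\<Union>\<F>"]) auto
  ultimately show ?thesis
    using assms unfolding directed_mono_diagram_def mono_in_def by auto
qed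

lemma alexandroff_glue_finite_subspaces:
  assumes alex: "alexandroff_space X"
    and d: "\<And>F. \<lbrakk>finite F; F \<subseteq> topspace X\<rbrakk> \<Longrightarrow> continuous_map (subtopology X F) W (d F)"
    and compat: "\<And>F G x. \<lbrakk>finite G; G \<subseteq> topspace X; F \<subseteq> G; x \<in> F\<rbrakk> \<Longrightarrow> d G x = d F x"
  shows "continuous_map X W (\<lambda>x. d {x} x)"
proof (rule alexandroff_continuous_mapI[OF alex])
  fix x assume "x \<in> topspace X"
  then show "d {x} x \<in> topspace W"
    using d[of "{x}"] by (auto simp: continuous_map_def)
next
  fix x y assume xy: "specialization_le X x y"
  then have F: "finite {x, y}" "{x, y} \<subseteq> topspace X"
    by (auto simp: specialization_le_def)
  have "specialization_le W (d {x, y} x) (d {x, y} y)"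
    using continuous_map_specialization_le[OF d[OF F] specialization_le_subtopology[OF xy]] by simp
  then show "specialization_le W (d {x} x) (d {y} y)"
    using compat[OF F, of "{x}" x] compat[OF F, of "{y}" y] by simp
qed

lemma alexandroff_colimit_finite_subspaces:
  assumes alex: "alexandroff_space X" and subtop: "\<And>S. C (subtopology X S)"
  shows "is_colimit_in C {F. finite F \<and> F \<subseteq> topspace X} (\<subseteq>) (subtopology X) (\<lambda>_ _ x. x)
    X (\<lambda>_ x. x)"
proof -
  let ?I = "{F. finite F \<and> F \<subseteq> topspace X}"
  have universal: "\<exists>u. continuous_map X W u \<and> (\<forall>F\<in>?I. \<forall>x\<in>topspace (subtopology X F). u x = d F x) \<and>
      (\<forall>u'. continuous_map X W u' \<and> (\<forall>F\<in>?I. \<forall>x\<in>topspace (subtopology X F). u' x = d F x)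
        \<longrightarrow> (\<forall>y\<in>topspace X. u' y = u y))"
    if d: "\<forall>F\<in>?I. continuous_map (subtopology X F) W (d F)"
      and compat: "\<forall>F\<in>?I. \<forall>G\<in>?I. F \<subseteq> G \<longrightarrow> (\<forall>x\<in>topspace (subtopology X F). d G x = d F x)"
    for W d
  proof (intro exI[of _ "\<lambda>x. d {x} x"] conjI allI impI ballI)
    have compat': "d G x = d F x" if "finite G" "G \<subseteq> topspace X" "F \<subseteq> G" "x \<in> F" for F G x
    proof -
      have "F \<in> ?I" "G \<in> ?I" "x \<in> topspace (subtopology X F)"
        using that finite_subset[OF that(3,1)] by auto
      then show ?thesis
        using compat that(3) by blast
    qed
    show "continuous_map X W (\<lambda>x. d {x} x)"
      by (rule alexandroff_glue_finite_subspaces[OF alex _ compat']) (use d in simp)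
    show "d {x} x = d F x" if "F \<in> ?I" and "x \<in> topspace (subtopology X F)" for F x
      using compat'[where F = "{x}" and G = F] that by simp
    show "u' y = d {y} y" if "continuous_map X W u' \<and>
        (\<forall>F\<in>?I. \<forall>x\<in>topspace (subtopology X F). u' x = d F x)" and "y \<in> topspace X" for u' y
      using that by simp
  qed
  show ?thesis
    unfolding is_colimit_in_def
  proof (intro conjI allI impI)
    show "C X"
      using subtop[of "topspace X"] by simp
    show "\<forall>F\<in>?I. continuous_map (subtopology X F) X (\<lambda>x. x)"
      using continuous_map_id_subt by (simp add: id_def)
    show "\<forall>F\<in>?I. \<forall>G\<in>?I. F \<subseteq> G \<longrightarrow> (\<forall>x\<in>topspace (subtopology X F). x = x)"
      by simp
  qed (elim conjE, rule universal)
qed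

lemma finite_topspace_of_fin_gen:
  fixes C :: "'a topology \<Rightarrow> bool"
  assumes alex: "alexandroff_space X" and subtop: "\<And>S. C (subtopology X S)"
    and fg: "fin_gen TYPE('a set) C X"
  shows "finite (topspace X)"
proof -
  have "\<exists>F\<in>{F. finite F \<and> F \<subseteq> topspace X}. \<exists>g. continuous_map X (subtopology X F) g \<and>
      (\<forall>x\<in>topspace X. x = g x)"
    using fg[unfolded fin_gen_def, rule_format, OF conjI continuous_map_id[unfolded id_def]]
      directed_mono_diagram_finite_subspaces[of C X, OF subtop]
      alexandroff_colimit_finite_subspaces[of X C, OF alex subtop]
    by blast
  then obtain F g where "finite F" and g: "continuous_map X (subtopology X F) g"
    and g_id: "\<And>x. x \<in> topspace X \<Longrightarrow> x = g x"
    by blast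
  have "g x \<in> F" if "x \<in> topspace X" for x
    using g that by (auto simp: continuous_map_def Pi_iff)
  then have "topspace X \<subseteq> F"
    using g_id by (metis subsetI)
  then show ?thesis
    using \<open>finite F\<close> finite_subset by blast
qed

theorem proposition8p5:
  fixes X :: "'a topology"
  shows "(alexandroff_space X \<longrightarrow>
            ((finite (topspace X) \<longrightarrow> fin_gen TYPE('i) (alexandroff_space :: 'b topology \<Rightarrow> bool) X) \<and>
             (fin_gen TYPE('a set) (alexandroff_space :: 'a topology \<Rightarrow> bool) X \<longrightarrow> finite (topspace X))))
       \<and> (alex0_space X \<longrightarrow>
            ((finite (topspace X) \<longrightarrow> fin_gen TYPE('i) (alex0_space :: 'b topology \<Rightarrow> bool) X) \<and>
             (fin_gen TYPE('a set) (alex0_space :: 'a topology \<Rightarrow> bool) X \<longrightarrow> finite (topspace X))))"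
proof (intro conjI impI)
  show "fin_gen TYPE('i) (alexandroff_space :: 'b topology \<Rightarrow> bool) X"
    if "finite (topspace X)"
    using that alexandroff_space_subtopology alexandroff_space_sierpinski_topology
      alexandroff_space_indiscrete_topology
    by (intro fin_gen_of_finite_topspace) auto
  show "finite (topspace X)"
    if "alexandroff_space X" "fin_gen TYPE('a set) (alexandroff_space :: 'a topology \<Rightarrow> bool) X"
    using that alexandroff_space_subtopology by (intro finite_topspace_of_fin_gen) auto
  show "fin_gen TYPE('i) (alex0_space :: 'b topology \<Rightarrow> bool) X"
    if "finite (topspace X)"
    using that alex0_space_subtopology
    by (intro fin_gen_of_finite_topspace)
      (auto simp: alex0_space_def alexandroff_space_sierpinski_topology t0_space_sierpinski_topology)
  show "finite (topspace X)"
    if "alex0_space X" "fin_gen TYPE('a set) (alex0_space :: 'a topology \<Rightarrow> bool) X"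
    using that alex0_space_subtopology
    by (intro finite_topspace_of_fin_gen) (auto simp: alex0_space_def)
qed

end
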